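(* Let $k\ge2$ be an even integer. Then the polynomial $\sum_{i=0}^ka^ib^{k-i}-\tfrac12(a^k+b^k)\in\mathbb R[a,b]$ is a sum of squares of polynomials. *)

theory Defs
  imports "HOL-Computational_Algebra.Polynomial"
begin

text \<open>Bivariate real polynomials R[a,b] are represented as (R[b])[a], i.e. the type
  real poly poly: the outer indeterminate is a, the inner indeterminate is b.\<close>

definition var_a :: "real poly poly" where
  "var_a = [:0, 1:]"

definition var_b :: "real poly poly" where
  "var_b = [:[:0, 1:]:]"

definition is_sos :: "real poly poly \<Rightarrow> bool" where
  "is_sos p \<longleftrightarrow> (\<exists>qs :: real poly poly list. p = (\<Sum>q\<leftarrow>qs. q ^ 2))"

end

theory Submission
  imports Defs
begin

text \<open>Write \<open>k = 2m\<close>.  In any commutative ring,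
  \<open>2 \<Sum>i\<le>2m. x^i y^(2m-i) - (x^2m + y^2m) = \<Sum>j<m. (x^j y^(m-j) + x^(j+1) y^(m-j-1))^2\<close>:
  going from \<open>m\<close> to \<open>m + 1\<close> multiplies both sides by \<open>y^2\<close> and adds \<open>(x^m y + x^(m+1))^2\<close>.
  Halving this identity costs only the square of the constant \<open>sqrt (1/2)\<close>.\<close>

lemma sum_powers_shift_square:
  fixes x y :: "'a::comm_ring_1"
  shows "(\<Sum>i=0..2*Suc m. x^i * y^(2*Suc m - i))
       = y^2 * (\<Sum>i=0..2*m. x^i * y^(2*m - i)) + x^(2*m+1) * y + x^(2*m+2)"
proof -
  have "(\<Sum>i=0..2*m. x^i * y^(2*Suc m - i)) = y^2 * (\<Sum>i=0..2*m. x^i * y^(2*m - i))"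
    unfolding sum_distrib_left
    by (rule sum.cong) (auto simp: Suc_diff_le power_Suc power2_eq_square algebra_simps)
  then show ?thesis
    by (simp add: numeral_2_eq_2)
qed

lemma sum_squares_shift_square:
  fixes x y :: "'a::comm_ring_1"
  shows "(\<Sum>j<Suc m. (x^j * y^(Suc m - j) + x^(j+1) * y^(Suc m - j - 1))^2)
       = y^2 * (\<Sum>j<m. (x^j * y^(m - j) + x^(j+1) * y^(m - j - 1))^2) + (x^m * y + x^(m+1))^2"
proof -
  have "x^j * y^(Suc m - j) + x^(j+1) * y^(Suc m - j - 1)
      = y * (x^j * y^(m - j) + x^(j+1) * y^(m - j - 1))" if "j < m" for j
  proof -
    have "y^(m - j) = y * y^(m - Suc j)"
      using that by (metis Suc_diff_Suc power_Suc)
    then show ?thesis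
      using that by (simp add: Suc_diff_le algebra_simps)
  qed
  then have "(\<Sum>j<m. (x^j * y^(Suc m - j) + x^(j+1) * y^(Suc m - j - 1))^2)
           = y^2 * (\<Sum>j<m. (x^j * y^(m - j) + x^(j+1) * y^(m - j - 1))^2)"
    unfolding sum_distrib_left by (intro sum.cong) (simp_all add: power_mult_distrib)
  then show ?thesis
    by simp
qed

lemma two_sum_powers_minus_extremes_eq_sum_squares:
  fixes x y :: "'a::comm_ring_1"
  shows "2 * (\<Sum>i=0..2*m. x^i * y^(2*m - i)) - (x^(2*m) + y^(2*m))
       = (\<Sum>j<m. (x^j * y^(m - j) + x^(j+1) * y^(m - j - 1))^2)"
proof (induction m)
  case 0
  then show ?case by simp
next
  case (Suc m)
  show ?case
    unfolding sum_powers_shift_square sum_squares_shift_square Suc.IH[symmetric]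
    by (simp add: power2_eq_square algebra_simps power_add numeral_2_eq_2)
qed

lemma is_sos_sum_squares: "is_sos (\<Sum>j<(n::nat). q j ^ 2)"
  unfolding is_sos_def
  by (rule exI[of _ "map q [0..<n]"]) (simp add: sum_list_sum_nth atLeast0LessThan)

lemma is_sos_square_mult:
  assumes "is_sos p"
  shows "is_sos (c^2 * p)"
proof -
  obtain qs where "p = (\<Sum>q\<leftarrow>qs. q^2)"
    using assms unfolding is_sos_def by blast
  then have "c^2 * p = (\<Sum>q\<leftarrow>map ((*) c) qs. q^2)"
    by (simp add: sum_list_const_mult power_mult_distrib comp_def)
  then show ?thesis
    unfolding is_sos_def by blast
qed

theorem mainTheorem16:
  fixes k :: nat
  assumes "k \<ge> 2" and "even k"
  shows "is_sos ((\<Sum>i=0..k. var_a ^ i * var_b ^ (k - i))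
                 - [:[:1/2:]:] * (var_a ^ k + var_b ^ k))"
proof -
  obtain m where k: "k = 2*m"
    using assms(2) by blast
  define c :: "real poly poly" where "c = [:[:sqrt (1/2):]:]"
  have c2: "c^2 = [:[:1/2:]:]"
    unfolding c_def by (simp add: power2_eq_square)
  have "c^2 * 2 = 1"
    unfolding c2 by (simp add: mult_2_right one_pCons)
  then have "(\<Sum>i=0..k. var_a ^ i * var_b ^ (k - i)) - c^2 * (var_a^k + var_b^k)
           = c^2 * (2 * (\<Sum>i=0..k. var_a ^ i * var_b ^ (k - i)) - (var_a^k + var_b^k))"
    by (simp add: algebra_simps)
  moreover have "is_sos \<dots>"
    unfolding k two_sum_powers_minus_extremes_eq_sum_squares
    by (intro is_sos_square_mult is_sos_sum_squares)
  ultimately show ?thesis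
    by (simp add: c2)
qed

end
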